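(* Let $n=|I|\ge 1$ and let $b,\kappa,\kappa_f,\kappa_s$ be positive integers with $\kappa_f<\kappa$, $\kappa_s=\kappa-\kappa_f$, and $\kappa_s\le b$. Let $k^*\in(\mathbb{B}^{n})^{\kappa}$ and $k^{**}\in(\mathbb{B}^{n})^{\kappa_f}$ with $k^{**}\neq (k^*_{\kappa_s+1},\dots,k^*_{\kappa})$. Define $$E^S(i,k)=\mathbb{1}\big[(k\neq k^* )\wedge (k_{1\leftrightarrow\kappa_s}=i_{1\leftrightarrow\kappa_s})\big],$$ $$P=\{(i,k): (k_{\kappa_s+1\leftrightarrow\kappa}\neq k^{**})\wedge(k\neq k^* )\}.$$ Let $f_b:(\mathbb{B}^n)^b\to\mathbb{B}^{m}$ and $f'_b:(\mathbb{B}^n)^b\times(\mathbb{B}^n)^\kappa\to\mathbb{B}^{m}$ be functions such that, for all $(i,k)$, $f'_b(i,k)\neq f_b(i)$ if and only if $E^S(i,k)=1$ or $(i,k)\in P$. Then every set $D\subseteq(\mathbb{B}^n)^b$ of input sequences with the property that for every key $k\neq k^*$ there exists $i\in D$ with $f'_b(i,k)\neq f_b(i)$ satisfies $|D|\ge 2^{\kappa_s n}$. In particular, any input sequence $i$ detects (i.e. satisfies $f'_b(i,k)\ne f_b(i)$ for) at most one key $k$ with suffix $k_{\kappa_s+1\leftrightarrow\kappa}=k^{**}$.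
   Context: $\mathbb{B}=\{0,1\}$. An input sequence is $i=(i_1,\dots,i_b)$ with each $i_j\in\mathbb{B}^n$ (the input applied in clock cycle $j$ of the $b$-unrolled encrypted circuit), and a key sequence is $k=(k_1,\dots,k_\kappa)$ with each $k_j\in\mathbb{B}^n$. For a sequence $s$, $s_{p\leftrightarrow q}$ denotes the subsequence $(s_p,\dots,s_q)$. $f_b$ is the function of the $b$-unrolled original circuit and $f'_b$ that of the $b$-unrolled encrypted circuit (after the $\kappa$ key cycles); $k^*$ is the correct key. An input sequence $i$ with $f'_b(i,k)\neq f_b(i)$ is said to detect (rule out) the wrong key $k$; the set $D$ models the set of distinguishing input patterns (DIPs) used by the SAT attack, so the conclusion states that the SAT attack needs at least $2^{\kappa_s n}$ DIPs. *)

theory Defs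
  imports Main
begin

text \<open>Bit vectors in B^n are boolean lists of length n; a sequence in (B^n)^l is a
list of length l of such vectors. The subsequence s_{p..q} (1-based) is
take/drop on lists.\<close>

definition bvecs :: "nat \<Rightarrow> bool list set" where
  "bvecs n = {v. length v = n}"

definition seqs :: "nat \<Rightarrow> nat \<Rightarrow> bool list list set" where
  "seqs n l = {s. length s = l \<and> (\<forall>x\<in>set s. length x = n)}"

definition ES :: "bool list list \<Rightarrow> nat \<Rightarrow> bool list list \<Rightarrow> bool list list \<Rightarrow> bool" where
  "ES kstar ks i k \<longleftrightarrow> k \<noteq> kstar \<and> take ks k = take ks i"

definition Pset :: "bool list list \<Rightarrow> bool list list \<Rightarrow> nat \<Rightarrow> (bool list list \<times> bool list list) set" where
  "Pset kstar kss ks = {(i, k). drop ks k \<noteq> kss \<and> k \<noteq> kstar}"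

end

theory Submission
  imports Defs
begin

text \<open>Every key with suffix k** lies outside P, so it is detected only through E^S, i.e. only
by inputs whose first \<kappa>s vectors equal its prefix. The 2^(\<kappa>s n) keys p @ k** therefore force
2^(\<kappa>s n) distinct input prefixes, and an input i detects at most the single such key
take \<kappa>s i @ k**.\<close>

lemma seqs_eq_lists_length: "seqs n l = {s. set s \<subseteq> bvecs n \<and> length s = l}"
  by (auto simp: seqs_def bvecs_def)

lemma finite_bvecs: "finite (bvecs n)"
  using finite_lists_length_eq[of "UNIV :: bool set" n] by (simp add: bvecs_def)

lemma card_bvecs: "card (bvecs n) = 2 ^ n"
  using card_lists_length_eq[of "UNIV :: bool set" n] by (simp add: bvecs_def)

lemma finite_seqs: "finite (seqs n l)"
  unfolding seqs_eq_lists_length using finite_bvecs by (rule finite_lists_length_eq)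

lemma card_seqs: "card (seqs n l) = 2 ^ (l * n)"
  unfolding seqs_eq_lists_length
  by (simp add: card_lists_length_eq finite_bvecs card_bvecs flip: power_mult)

lemma append_in_seqs: "p \<in> seqs n l \<Longrightarrow> q \<in> seqs n l' \<Longrightarrow> p @ q \<in> seqs n (l + l')"
  by (auto simp: seqs_def)

lemma ES_or_Pset_suffix_imp_take_eq:
  assumes "ES kstar ks i k \<or> (i, k) \<in> Pset kstar kss ks" and "drop ks k = kss"
  shows "take ks k = take ks i"
  using assms by (auto simp: ES_def Pset_def)

lemma card_le_if_subset_image:
  assumes "finite D" and "A \<subseteq> g ` D"
  shows "card A \<le> card D"
  using card_mono[OF finite_imageI[OF assms(1)] assms(2)] card_image_le[OF assms(1)]
  by (rule order_trans)

theorem theorem1: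
  fixes n m b \<kappa> \<kappa>f \<kappa>s :: nat
    and kstar kss :: "bool list list"
    and f :: "bool list list \<Rightarrow> bool list"
    and f' :: "bool list list \<Rightarrow> bool list list \<Rightarrow> bool list"
  assumes n_pos: "n \<ge> 1"
    and pos: "b > 0" "\<kappa> > 0" "\<kappa>f > 0" "\<kappa>s > 0"
    and kf_lt: "\<kappa>f < \<kappa>"
    and ks_def: "\<kappa>s = \<kappa> - \<kappa>f"
    and ks_le: "\<kappa>s \<le> b"
    and kstar: "kstar \<in> seqs n \<kappa>"
    and kss: "kss \<in> seqs n \<kappa>f"
    and kss_ne: "kss \<noteq> drop \<kappa>s kstar"
    and f_range: "\<forall>i\<in>seqs n b. f i \<in> bvecs m"
    and f'_range: "\<forall>i\<in>seqs n b. \<forall>k\<in>seqs n \<kappa>. f' i k \<in> bvecs m"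
    and char: "\<forall>i\<in>seqs n b. \<forall>k\<in>seqs n \<kappa>.
                 (f' i k \<noteq> f i \<longleftrightarrow> (ES kstar \<kappa>s i k \<or> (i, k) \<in> Pset kstar kss \<kappa>s))"
  shows "(\<forall>D. D \<subseteq> seqs n b \<longrightarrow>
            (\<forall>k\<in>seqs n \<kappa>. k \<noteq> kstar \<longrightarrow> (\<exists>i\<in>D. f' i k \<noteq> f i)) \<longrightarrow>
            card D \<ge> 2 ^ (\<kappa>s * n))
       \<and> (\<forall>i\<in>seqs n b. card {k \<in> seqs n \<kappa>. drop \<kappa>s k = kss \<and> f' i k \<noteq> f i} \<le> 1)"
proof -
  have prefix_detected: "take \<kappa>s k = take \<kappa>s i"
    if "i \<in> seqs n b" "k \<in> seqs n \<kappa>" "drop \<kappa>s k = kss" "f' i k \<noteq> f i" for i k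
    using that char ES_or_Pset_suffix_imp_take_eq by blast
  have "card D \<ge> 2 ^ (\<kappa>s * n)"
    if D: "D \<subseteq> seqs n b" and cov: "\<forall>k\<in>seqs n \<kappa>. k \<noteq> kstar \<longrightarrow> (\<exists>i\<in>D. f' i k \<noteq> f i)" for D
  proof -
    have "seqs n \<kappa>s \<subseteq> take \<kappa>s ` D"
    proof
      fix p assume p: "p \<in> seqs n \<kappa>s"
      then have k: "p @ kss \<in> seqs n \<kappa>" "drop \<kappa>s (p @ kss) = kss" "take \<kappa>s (p @ kss) = p"
        using append_in_seqs[OF p kss] kf_lt ks_def by (auto simp: seqs_def)
      then have "p @ kss \<noteq> kstar" using kss_ne by auto
      then obtain i where "i \<in> D" "f' i (p @ kss) \<noteq> f i" using cov k by blast
      then show "p \<in> take \<kappa>s ` D" using prefix_detected[of i "p @ kss"] D k by force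
    qed
    then show ?thesis
      using card_le_if_subset_image finite_subset[OF D finite_seqs] card_seqs by metis
  qed
  moreover have "card {k \<in> seqs n \<kappa>. drop \<kappa>s k = kss \<and> f' i k \<noteq> f i} \<le> 1"
    if i: "i \<in> seqs n b" for i
  proof -
    have "{k \<in> seqs n \<kappa>. drop \<kappa>s k = kss \<and> f' i k \<noteq> f i} \<subseteq> {take \<kappa>s i @ kss}"
      using prefix_detected[OF i] by (auto intro: append_take_drop_id[symmetric, THEN trans])
    then show ?thesis using card_mono[of "{take \<kappa>s i @ kss}"] by fastforce
  qed
  ultimately show ?thesis by blast
qed

end
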